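(* Let $H=\left(\frac{3,-1}{\mathbb{Q}}\right)$, and let $d_1\neq d_2$ be square-free positive integers such that for $i=1,2$ the set $S_{d_i}$ is infinite. For $i=1,2$ let $\varphi_{d_i}:\mathbb{N}\to S_{d_i}$ be a bijection, let $a_i,b_i>0$ be rationals such that $a_i+b_i\sqrt{d_i}$ is a unit of infinite order in $\mathbb{Q}(\sqrt{d_i})$, and put $\psi_{d_i}(t,m)=(a_i+b_i\varphi_{d_i}(t))^m\in H$. Then for $t_1,t_2,m_1,m_2\in\mathbb{N}$ one has $\psi_{d_1}(t_1,m_1)=\psi_{d_2}(t_2,m_2)$ if and only if $m_1=m_2=0$.
   Context: $\mathbb{N}=\{0,1,2,\dots\}$. $H=\left(\frac{3,-1}{\mathbb{Q}}\right)$ is the quaternion $\mathbb{Q}$-algebra with basis $1,I,J,K=IJ$ and relations $I^2=3$, $J^2=-1$, $IJ=-JI$. For a square-free $d>0$, $S_d=\{xI+yJ+zK:(x,y,z)\in\mathbb{Z}^3,\ 3x^2-y^2+3z^2=d\}$; each $\omega\in S_d$ satisfies $\omega^2=d$. *)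

theory Defs
  imports Complex_Main "HOL-Computational_Algebra.Squarefree"
begin

text \<open>Elements of the quaternion algebra H = (3,-1 / Q): HQ x0 x1 x2 x3 stands for
  x0 + x1 I + x2 J + x3 K with I^2 = 3, J^2 = -1, K = IJ = -JI.\<close>
datatype hquat = HQ rat rat rat rat

fun hmul :: "hquat \<Rightarrow> hquat \<Rightarrow> hquat" where
  "hmul (HQ x0 x1 x2 x3) (HQ y0 y1 y2 y3) =
     HQ (x0*y0 + 3*x1*y1 - x2*y2 + 3*x3*y3)
        (x0*y1 + x1*y0 + x2*y3 - x3*y2)
        (x0*y2 + x2*y0 + 3*x1*y3 - 3*x3*y1)
        (x0*y3 + x3*y0 + x1*y2 - x2*y1)"

fun hadd :: "hquat \<Rightarrow> hquat \<Rightarrow> hquat" where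
  "hadd (HQ x0 x1 x2 x3) (HQ y0 y1 y2 y3) = HQ (x0+y0) (x1+y1) (x2+y2) (x3+y3)"

definition hscal :: "rat \<Rightarrow> hquat" where
  "hscal c = HQ c 0 0 0"

primrec hpow :: "hquat \<Rightarrow> nat \<Rightarrow> hquat" where
  "hpow q 0 = hscal 1"
| "hpow q (Suc n) = hmul q (hpow q n)"

definition S :: "int \<Rightarrow> hquat set" where
  "S d = {HQ 0 (of_int x) (of_int y) (of_int z) | x y z :: int.
            3*x^2 - y^2 + 3*z^2 = d}"

definition psi :: "rat \<Rightarrow> rat \<Rightarrow> (nat \<Rightarrow> hquat) \<Rightarrow> nat \<Rightarrow> nat \<Rightarrow> hquat" where
  "psi a b \<phi> t m = hpow (hadd (hscal a) (hmul (hscal b) (\<phi> t))) m"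

text \<open>a + b sqrt d (viewed inside R, which contains Q(sqrt d)) has infinite
  multiplicative order.\<close>
definition inf_order_unit :: "int \<Rightarrow> rat \<Rightarrow> rat \<Rightarrow> bool" where
  "inf_order_unit d a b \<longleftrightarrow>
     (let u = of_rat a + of_rat b * sqrt (real_of_int d) in
        u \<noteq> 0 \<and> (\<forall>n::nat. n > 0 \<longrightarrow> u ^ n \<noteq> 1))"

end

theory Submission
  imports Defs
begin

text \<open>If w = xI + yJ + zK then w^2 = d with d = 3x^2 - y^2 + 3z^2, hence (a + bw)^m = A + Bw
  where A + B sqrt d = (a + b sqrt d)^m, and for a, b > 0 the coefficient B is positive as soon
  as m > 0. Comparing the pure parts of two equal powers gives B1 w1 = B2 w2, and squaring gives
  d1 B1^2 = d2 B2^2. As d1, d2 > 0, either B1 = B2 = 0, i.e. m1 = m2 = 0, or d1/d2 is the square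
  of a rational, which is impossible for distinct square-free integers.\<close>

fun pow_coeffs :: "rat \<Rightarrow> rat \<Rightarrow> rat \<Rightarrow> nat \<Rightarrow> rat \<times> rat" where
  "pow_coeffs a b d 0 = (1, 0)"
| "pow_coeffs a b d (Suc m) =
     (let (A, B) = pow_coeffs a b d m in (a*A + b*B*d, a*B + b*A))"

lemma hpow_scalar_plus_pure:
  assumes "3*x^2 - y^2 + 3*z^2 = d"
  shows "hpow (hadd (hscal a) (hmul (hscal b) (HQ 0 x y z))) m =
         (let (A, B) = pow_coeffs a b d m in HQ A (B*x) (B*y) (B*z))"
proof (induction m)
  case 0
  then show ?case by (simp add: hscal_def)
next
  case (Suc m)
  obtain A B where AB: "pow_coeffs a b d m = (A, B)" by fastforce
  have d: "d = 3*x*x - y*y + 3*z*z" using assms by (simp add: power2_eq_square)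
  show ?case using Suc AB by (simp add: d hscal_def algebra_simps)
qed

lemma pow_coeffs_fst_pos_snd_nonneg:
  assumes "a > 0" "b > 0" "d > 0"
  shows "fst (pow_coeffs a b d m) > 0 \<and> snd (pow_coeffs a b d m) \<ge> 0"
proof (induction m)
  case 0
  then show ?case by simp
next
  case (Suc m)
  obtain A B where AB: "pow_coeffs a b d m = (A, B)" by fastforce
  with Suc have "A > 0" "B \<ge> 0" by auto
  with assms have "a*A + b*B*d > 0" "a*B + b*A > 0"
    by (simp_all add: add_pos_nonneg add_nonneg_pos)
  then show ?case using AB by simp
qed

lemma pow_coeffs_snd_pos_iff:
  assumes "a > 0" "b > 0" "d > 0"
  shows "snd (pow_coeffs a b d m) > 0 \<longleftrightarrow> m > 0"
proof (cases m)
  case (Suc k)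
  obtain A B where AB: "pow_coeffs a b d k = (A, B)" by fastforce
  with pow_coeffs_fst_pos_snd_nonneg[OF assms, of k] have "A > 0" "B \<ge> 0" by auto
  with assms have "a*B + b*A > 0" by (simp add: add_nonneg_pos)
  then show ?thesis using Suc AB by simp
qed simp

lemma squarefree_eq_if_ratio_square:
  fixes d1 d2 :: int and r :: rat
  assumes "squarefree d1" "squarefree d2" and "of_int d1 = of_int d2 * r^2"
  shows "d1 = d2"
proof -
  obtain p q where pq: "quotient_of r = (p, q)" by fastforce
  have "q > 0" and "coprime p q" and r: "r = of_int p / of_int q"
    using pq quotient_of_denom_pos quotient_of_coprime quotient_of_div by blast+
  have "of_int d1 * (of_int q)^2 = (of_int d2 * (of_int p)^2 :: rat)"
    using assms(3) \<open>q > 0\<close> unfolding r by (simp add: field_simps power2_eq_square)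
  then have eq: "d1 * q^2 = d2 * p^2"
    by (metis of_int_eq_iff of_int_mult of_int_power)
  have "coprime (q^2) (p^2)" using \<open>coprime p q\<close> by (simp add: coprime_commute)
  moreover have "q^2 dvd d2 * p^2" using eq by (metis dvd_triv_right)
  ultimately have "q^2 dvd d2" by (metis coprime_dvd_mult_left_iff)
  then have "is_unit q" using assms(2) by (rule squarefreeD[rotated])
  with \<open>q > 0\<close> have q: "q = 1" by auto
  have "p^2 dvd d1" using eq q by (metis dvd_triv_right mult_1_right power_one)
  then have "is_unit p" using assms(1) by (rule squarefreeD[rotated])
  then have "\<bar>p\<bar> = 1" by simp
  then have "p^2 = 1" by (metis power2_abs power_one)
  then show ?thesis using eq q by simp
qed

lemma S_memE:
  assumes "\<omega> \<in> S d"
  obtains x y z :: rat where "\<omega> = HQ 0 x y z" and "3*x^2 - y^2 + 3*z^2 = of_int d"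
proof -
  from assms obtain x y z :: int
    where "\<omega> = HQ 0 (of_int x) (of_int y) (of_int z)" and "3*x^2 - y^2 + 3*z^2 = d"
    unfolding S_def by blast
  moreover have "3*(of_int x)^2 - (of_int y)^2 + 3*(of_int z)^2 = (of_int (3*x^2 - y^2 + 3*z^2) :: rat)"
    by simp
  ultimately show thesis using that by metis
qed

lemma hpow_eq_imp_scaled_eq:
  assumes "\<omega>1 \<in> S d1" "\<omega>2 \<in> S d2"
    and "hpow (hadd (hscal a1) (hmul (hscal b1) \<omega>1)) m1 =
         hpow (hadd (hscal a2) (hmul (hscal b2) \<omega>2)) m2"
  shows "of_int d1 * (snd (pow_coeffs a1 b1 (of_int d1) m1))^2 =
         of_int d2 * (snd (pow_coeffs a2 b2 (of_int d2) m2))^2"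
proof -
  obtain x1 y1 z1 where \<omega>1: "\<omega>1 = HQ 0 x1 y1 z1" and d1: "3*x1^2 - y1^2 + 3*z1^2 = of_int d1"
    using assms(1) by (rule S_memE)
  obtain x2 y2 z2 where \<omega>2: "\<omega>2 = HQ 0 x2 y2 z2" and d2: "3*x2^2 - y2^2 + 3*z2^2 = of_int d2"
    using assms(2) by (rule S_memE)
  obtain A1 B1 where AB1: "pow_coeffs a1 b1 (of_int d1) m1 = (A1, B1)" by fastforce
  obtain A2 B2 where AB2: "pow_coeffs a2 b2 (of_int d2) m2 = (A2, B2)" by fastforce
  have "B1*x1 = B2*x2" "B1*y1 = B2*y2" "B1*z1 = B2*z2"
    using assms(3)
    by (simp_all add: \<omega>1 \<omega>2 hpow_scalar_plus_pure[OF d1] hpow_scalar_plus_pure[OF d2] AB1 AB2)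
  have "of_int d1 * B1^2 = 3*(B1*x1)^2 - (B1*y1)^2 + 3*(B1*z1)^2"
    unfolding d1[symmetric] by (simp add: algebra_simps power2_eq_square)
  also have "\<dots> = 3*(B2*x2)^2 - (B2*y2)^2 + 3*(B2*z2)^2"
    using \<open>B1*x1 = B2*x2\<close> \<open>B1*y1 = B2*y2\<close> \<open>B1*z1 = B2*z2\<close> by simp
  also have "\<dots> = of_int d2 * B2^2"
    unfolding d2[symmetric] by (simp add: algebra_simps power2_eq_square)
  finally show ?thesis using AB1 AB2 by simp
qed

theorem mainTheorem5:
  fixes d1 d2 :: int and \<phi>1 \<phi>2 :: "nat \<Rightarrow> hquat" and a1 b1 a2 b2 :: rat
  assumes "d1 \<noteq> d2"
    and "squarefree d1" and "d1 > 0" and "squarefree d2" and "d2 > 0"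
    and "infinite (S d1)" and "infinite (S d2)"
    and "bij_betw \<phi>1 UNIV (S d1)" and "bij_betw \<phi>2 UNIV (S d2)"
    and "a1 > 0" and "b1 > 0" and "a2 > 0" and "b2 > 0"
    and "inf_order_unit d1 a1 b1" and "inf_order_unit d2 a2 b2"
  shows "\<forall>t1 t2 m1 m2 :: nat.
           psi a1 b1 \<phi>1 t1 m1 = psi a2 b2 \<phi>2 t2 m2 \<longleftrightarrow> (m1 = 0 \<and> m2 = 0)"
proof (intro allI iffI)
  fix t1 t2 m1 m2
  define B1 where "B1 = snd (pow_coeffs a1 b1 (of_int d1) m1)"
  define B2 where "B2 = snd (pow_coeffs a2 b2 (of_int d2) m2)"
  assume "psi a1 b1 \<phi>1 t1 m1 = psi a2 b2 \<phi>2 t2 m2"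
  moreover have "\<phi>1 t1 \<in> S d1" "\<phi>2 t2 \<in> S d2" using assms(8,9) bij_betwE by blast+
  ultimately have norm: "of_int d1 * B1^2 = of_int d2 * B2^2"
    unfolding psi_def B1_def B2_def by (blast intro: hpow_eq_imp_scaled_eq)
  have B1: "B1 > 0 \<longleftrightarrow> m1 > 0" "B1 \<ge> 0"
    using pow_coeffs_snd_pos_iff pow_coeffs_fst_pos_snd_nonneg assms(3,10,11) B1_def by auto
  have B2: "B2 > 0 \<longleftrightarrow> m2 > 0" "B2 \<ge> 0"
    using pow_coeffs_snd_pos_iff pow_coeffs_fst_pos_snd_nonneg assms(5,12,13) B2_def by auto
  have "B1 = 0 \<longleftrightarrow> B2 = 0" using norm assms(3,5) by auto
  show "m1 = 0 \<and> m2 = 0"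
  proof (rule ccontr)
    assume "\<not> (m1 = 0 \<and> m2 = 0)"
    with B1 B2 \<open>B1 = 0 \<longleftrightarrow> B2 = 0\<close> have "B1 > 0" "B2 > 0" by auto
    with norm have "of_int d2 = of_int d1 * (B1/B2)^2"
      by (simp add: field_simps power2_eq_square)
    with assms(4,2) have "d2 = d1" by (rule squarefree_eq_if_ratio_square)
    with assms(1) show False by simp
  qed
qed (simp add: psi_def)

end
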